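(* Let $\Gamma$ be a countable group acting on a countably infinite set $X$ preserving a mean $\mu$, and suppose that for every $\gamma\neq1$ the fixed point set of $\gamma$ in $X$ has $\mu$-measure less than $1$. Then $\Gamma$ admits an action on a countably infinite set $K$ preserving a mean $\nu$ on $K$ such that for every $\gamma\ne1$ the fixed point set of $\gamma$ in $K$ has $\nu$-measure $0$.
   Context: A mean on a set $X$ is a finitely additive $\mu:2^X\to[0,1]$ with $\mu(X)=1$; an action preserves $\mu$ if $\mu(\gamma A)=\mu(A)$ for all $\gamma$ and $A$. *)

theory Defs
  imports Complex_Main "HOL-Library.Countable_Set" "HOL-Algebra.Group_Action"
begin

definition is_mean :: "'x set \<Rightarrow> ('x set \<Rightarrow> real) \<Rightarrow> bool" where
  "is_mean X \<mu> \<longleftrightarrow>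
     (\<forall>A. A \<subseteq> X \<longrightarrow> 0 \<le> \<mu> A \<and> \<mu> A \<le> 1) \<and>
     \<mu> X = 1 \<and>
     (\<forall>A B. A \<subseteq> X \<longrightarrow> B \<subseteq> X \<longrightarrow> A \<inter> B = {} \<longrightarrow> \<mu> (A \<union> B) = \<mu> A + \<mu> B)"

definition preserves_mean ::
  "('g, 'b) monoid_scheme \<Rightarrow> 'x set \<Rightarrow> ('g \<Rightarrow> 'x \<Rightarrow> 'x) \<Rightarrow> ('x set \<Rightarrow> real) \<Rightarrow> bool" where
  "preserves_mean G X \<phi> \<mu> \<longleftrightarrow>
     (\<forall>g \<in> carrier G. \<forall>A. A \<subseteq> X \<longrightarrow> \<mu> (\<phi> g ` A) = \<mu> A)"

definition fixset :: "'x set \<Rightarrow> ('g \<Rightarrow> 'x \<Rightarrow> 'x) \<Rightarrow> 'g \<Rightarrow> 'x set" where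
  "fixset X \<phi> g = {x \<in> X. \<phi> g x = x}"

end

theory Submission
  imports Defs
begin

(* Let a group act on a countably infinite set X preserving a mean mu such
   that every nontrivial element fixes a set of mu-measure less than 1.  On the tuples of
   length n we form the product mean mu^n; an element g fixes a tuple iff it fixes every
   entry, so the fixed tuples of length n have measure mu(Fix g)^n, which tends to 0.
   Averaging the means mu^n along a free ultrafilter on the lengths gives an invariant mean
   on the countably infinite set of all finite lists over X in which every nontrivial
   fixed point set is null; an enumeration of the lists transports everything to nat. *)

definition ultrafilter :: "'a filter \<Rightarrow> bool" where
  "ultrafilter F \<longleftrightarrow> F \<noteq> bot \<and> (\<forall>P. eventually P F \<or> eventually (\<lambda>x. \<not> P x) F)"

(* A maximal proper filter decides every predicate P: otherwise F restricted to P would be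
   a strictly finer proper filter. *)
lemma maximal_filter_ultrafilter:
  assumes proper: "F \<noteq> bot" and maximal: "\<And>G. G \<noteq> bot \<Longrightarrow> G \<le> F \<Longrightarrow> G = F"
  shows "ultrafilter F"
  unfolding ultrafilter_def
proof (intro conjI allI disjCI proper)
  fix P assume not_co: "\<not> eventually (\<lambda>x. \<not> P x) F"
  let ?G = "inf F (principal {x. P x})"
  have "?G \<noteq> bot"
    using not_co by (simp add: trivial_limit_def eventually_inf_principal)
  then have "?G = F" by (rule maximal) simp
  moreover have "eventually P ?G" by (simp add: eventually_inf_principal)
  ultimately show "eventually P F" by simp
qed

(* Ultrafilter lemma: every proper filter is refined by an ultrafilter (Zorn's lemma; a
   chain of proper filters is directed, so its infimum is still proper). *)
lemma ultrafilter_below: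
  fixes F :: "'a filter"
  assumes "F \<noteq> bot"
  shows "\<exists>U \<le> F. ultrafilter U"
proof -
  define A where "A = {G. G \<noteq> bot \<and> G \<le> F}"
  define R where "R = relation_of (\<lambda>G H. H \<le> G) A"
  have "partial_order_on A R"
    by (auto simp: R_def relation_of_def partial_order_on_def preorder_on_def
        refl_on_def trans_def antisym_def)
  moreover have "\<exists>L \<in> A. \<forall>G \<in> C. L \<le> G" if C: "C \<in> Chains R" for C
  proof (cases "C = {}")
    case True
    then show ?thesis using assms by (auto simp: A_def)
  next
    case False
    have CA: "C \<subseteq> A" and comparable: "\<And>G H. G \<in> C \<Longrightarrow> H \<in> C \<Longrightarrow> G \<le> H \<or> H \<le> G"
      using C by (auto simp: Chains_def R_def relation_of_def)
    have directed: "\<exists>K \<in> C. K \<le> inf G H" if "G \<in> C" "H \<in> C" for G H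
      using comparable[OF that] that by (metis inf.absorb_iff2 inf.absorb_iff1 order_refl)
    obtain G where "G \<in> C" using False by blast
    then have "Inf C \<le> F" using CA by (auto simp: A_def intro: Inf_lower2)
    moreover have "Inf C \<noteq> bot"
      using CA by (auto simp: eventually_Inf_base[OF False directed] A_def trivial_limit_def)
    ultimately show ?thesis by (auto simp: A_def intro: Inf_lower)
  qed
  ultimately obtain U where U: "U \<in> A" and max: "\<And>G. G \<in> A \<Longrightarrow> G \<le> U \<Longrightarrow> G = U"
    using predicate_Zorn[of A "\<lambda>G H. H \<le> G"] unfolding R_def by blast
  have "ultrafilter U"
    using U by (intro maximal_filter_ultrafilter) (auto simp: A_def intro: max)
  with U show ?thesis by (auto simp: A_def)
qed

lemma free_ultrafilter_exists: "\<exists>U :: nat filter. ultrafilter U \<and> U \<le> sequentially"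
  using ultrafilter_below[of sequentially] by auto

(* The limit of a sequence along a filter; meaningful when the limit exists. *)
definition ulim :: "'a filter \<Rightarrow> ('a \<Rightarrow> real) \<Rightarrow> real" where
  "ulim U s = (THE L. (s \<longlongrightarrow> L) U)"

lemma ulim_unique:
  assumes "ultrafilter U" "(s \<longlongrightarrow> L) U"
  shows "ulim U s = L"
  using assms tendsto_unique unfolding ulim_def ultrafilter_def by blast

(* Every bounded real sequence converges along an ultrafilter: its limit is the supremum
   of the values it eventually exceeds. *)
lemma ultrafilter_tendsto_ulim:
  assumes U: "ultrafilter U" and bounded: "\<And>n. s n \<in> {a..b}"
  shows "(s \<longlongrightarrow> ulim U s) U"
proof -
  define S where "S = {c. eventually (\<lambda>n. c \<le> s n) U}"
  have "a \<in> S" using bounded by (simp add: S_def)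
  moreover have "c \<le> b" if "c \<in> S" for c
  proof -
    have "eventually (\<lambda>n. c \<le> s n) U" using that by (simp add: S_def)
    then have "eventually (\<lambda>n. c \<le> b) U"
      by (rule eventually_mono) (meson bounded atLeastAtMost_iff order_trans)
    then show ?thesis using U by (auto simp: ultrafilter_def eventually_const_iff)
  qed
  ultimately have ne: "S \<noteq> {}" and bdd: "bdd_above S" by (auto simp: bdd_above_def)
  have "(s \<longlongrightarrow> Sup S) U"
  proof (rule order_tendstoI)
    fix c assume "c < Sup S"
    then obtain d where "d \<in> S" "c < d" using less_cSup_iff[OF ne bdd] by blast
    then show "eventually (\<lambda>n. c < s n) U" by (auto simp: S_def elim: eventually_mono)
  next
    fix c assume "Sup S < c"
    then have "c \<notin> S" using cSup_upper[OF _ bdd] by force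
    then show "eventually (\<lambda>n. s n < c) U"
      using U by (auto simp: ultrafilter_def S_def not_le)
  qed
  then show ?thesis using ulim_unique[OF U] by simp
qed

lemma ulim_bounds:
  assumes U: "ultrafilter U" and bounded: "\<And>n. s n \<in> {a..b}"
  shows "ulim U s \<in> {a..b}"
proof -
  have lim: "(s \<longlongrightarrow> ulim U s) U" and proper: "U \<noteq> bot"
    using ultrafilter_tendsto_ulim[OF U bounded] U by (auto simp: ultrafilter_def)
  have "a \<le> ulim U s" using bounded by (intro tendsto_lowerbound[OF lim _ proper]) auto
  moreover have "ulim U s \<le> b" using bounded by (intro tendsto_upperbound[OF lim _ proper]) auto
  ultimately show ?thesis by simp
qed

lemma ulim_add:
  assumes U: "ultrafilter U" and "\<And>n. s n \<in> {a..b}" "\<And>n. t n \<in> {c..d}"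
  shows "ulim U (\<lambda>n. s n + t n) = ulim U s + ulim U t"
  using ulim_unique[OF U tendsto_add[OF ultrafilter_tendsto_ulim[OF assms(1,2)]
      ultrafilter_tendsto_ulim[OF assms(1,3)]]] .

lemma ulim_sequentially:
  assumes "ultrafilter U" "U \<le> sequentially" "s \<longlonglongrightarrow> L"
  shows "ulim U s = L"
  using ulim_unique[OF assms(1) tendsto_mono[OF assms(2,3)]] .

locale mean_space =
  fixes X :: "'x set" and \<mu> :: "'x set \<Rightarrow> real"
  assumes mean: "is_mean X \<mu>"
begin

lemma measure_bounds: "A \<subseteq> X \<Longrightarrow> 0 \<le> \<mu> A \<and> \<mu> A \<le> 1"
  using mean unfolding is_mean_def by blast

lemma measure_Un: "A \<subseteq> X \<Longrightarrow> B \<subseteq> X \<Longrightarrow> A \<inter> B = {} \<Longrightarrow> \<mu> (A \<union> B) = \<mu> A + \<mu> B"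
  using mean unfolding is_mean_def by blast

lemma measure_empty: "\<mu> {} = 0"
  using measure_Un[of "{}" "{}"] by simp

definition mean_preserving :: "('x \<Rightarrow> 'x) \<Rightarrow> bool" where
  "mean_preserving \<sigma> \<longleftrightarrow> bij_betw \<sigma> X X \<and> (\<forall>S \<subseteq> X. \<mu> (\<sigma> ` S) = \<mu> S)"

(* Integral of a nat-valued function f bounded by N, by the layer-cake formula: the sum of
   the measures of its superlevel sets. Finite additivity of mu is all it needs. *)
definition layer_sum :: "nat \<Rightarrow> ('x \<Rightarrow> nat) \<Rightarrow> real" where
  "layer_sum N f = (\<Sum>k = 1..N. \<mu> {x \<in> X. k \<le> f x})"

lemma layer_sum_cong: "(\<And>x. x \<in> X \<Longrightarrow> f x = g x) \<Longrightarrow> layer_sum N f = layer_sum N g"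
  unfolding layer_sum_def by (intro sum.cong refl arg_cong[where f = \<mu>]) auto

lemma layer_sum_bounds: "0 \<le> layer_sum N f \<and> layer_sum N f \<le> real N"
proof -
  have level: "0 \<le> \<mu> {x \<in> X. k \<le> f x} \<and> \<mu> {x \<in> X. k \<le> f x} \<le> 1" for k
    by (rule measure_bounds) auto
  have "layer_sum N f \<le> (\<Sum>k = 1..N. 1)"
    unfolding layer_sum_def by (rule sum_mono) (use level in blast)
  moreover have "0 \<le> layer_sum N f" unfolding layer_sum_def by (rule sum_nonneg) (use level in blast)
  ultimately show ?thesis by simp
qed

lemma layer_sum_level:
  assumes "\<And>x. x \<in> X \<Longrightarrow> f x \<le> N" "N \<le> N'"
  shows "layer_sum N' f = layer_sum N f"
  unfolding layer_sum_def
proof (rule sum.mono_neutral_right)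
  show "\<forall>k \<in> {1..N'} - {1..N}. \<mu> {x \<in> X. k \<le> f x} = 0"
  proof
    fix k assume "k \<in> {1..N'} - {1..N}"
    then have "{x \<in> X. k \<le> f x} = {}" using assms(1) by (auto simp: not_le intro: le_less_trans)
    then show "\<mu> {x \<in> X. k \<le> f x} = 0" by (metis measure_empty)
  qed
qed (use assms(2) in auto)

lemma measure_level_sets:
  fixes f :: "'x \<Rightarrow> nat"
  shows "(\<Sum>j = 0..N. \<mu> {x \<in> X. x \<in> B \<and> f x = j}) = \<mu> {x \<in> X. x \<in> B \<and> f x \<le> N}"
proof (induction N)
  case (Suc N)
  have "{x \<in> X. x \<in> B \<and> f x \<le> Suc N} = {x \<in> X. x \<in> B \<and> f x \<le> N} \<union> {x \<in> X. x \<in> B \<and> f x = Suc N}"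
    by auto
  then have "\<mu> {x \<in> X. x \<in> B \<and> f x \<le> Suc N} =
      \<mu> {x \<in> X. x \<in> B \<and> f x \<le> N} + \<mu> {x \<in> X. x \<in> B \<and> f x = Suc N}"
    by (simp only:, intro measure_Un) auto
  then show ?case using Suc by simp
qed simp

lemma layer_sum_add_indicator:
  assumes "\<And>x. x \<in> X \<Longrightarrow> f x \<le> N"
  shows "layer_sum (Suc N) (\<lambda>x. f x + (if x \<in> B then 1 else 0)) = layer_sum N f + \<mu> (B \<inter> X)"
proof -
  have split: "\<mu> {x \<in> X. k \<le> f x + (if x \<in> B then 1 else 0)} =
      \<mu> {x \<in> X. k \<le> f x} + \<mu> {x \<in> X. x \<in> B \<and> f x = k - 1}" if "1 \<le> k" for k
  proof -
    have "{x \<in> X. k \<le> f x + (if x \<in> B then 1 else 0)} =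
        {x \<in> X. k \<le> f x} \<union> {x \<in> X. x \<in> B \<and> f x = k - 1}"
      using that by auto
    then show ?thesis by (simp only:, intro measure_Un) (use that in auto)
  qed
  have "layer_sum (Suc N) (\<lambda>x. f x + (if x \<in> B then 1 else 0)) =
      layer_sum (Suc N) f + (\<Sum>k = 1..Suc N. \<mu> {x \<in> X. x \<in> B \<and> f x = k - 1})"
    unfolding layer_sum_def by (simp add: split sum.distrib)
  also have "layer_sum (Suc N) f = layer_sum N f"
    using layer_sum_level[OF assms, where N'="Suc N"] by simp
  also have "(\<Sum>k = 1..Suc N. \<mu> {x \<in> X. x \<in> B \<and> f x = k - 1}) = (\<Sum>j = 0..N. \<mu> {x \<in> X. x \<in> B \<and> f x = j})"
    unfolding One_nat_def sum.shift_bounds_cl_Suc_ivl by simp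
  also have "\<dots> = \<mu> (B \<inter> X)"
    unfolding measure_level_sets using assms by (intro arg_cong[where f = \<mu>]) auto
  finally show ?thesis .
qed

lemma layer_sum_add:
  assumes "\<And>x. x \<in> X \<Longrightarrow> f x \<le> N" "\<And>x. x \<in> X \<Longrightarrow> g x \<le> M"
  shows "layer_sum (N + M) (\<lambda>x. f x + g x) = layer_sum N f + layer_sum M g"
  using assms(2)
proof (induction M arbitrary: g)
  case 0
  then have "layer_sum N (\<lambda>x. f x + g x) = layer_sum N f" by (intro layer_sum_cong) auto
  then show ?case by (simp add: layer_sum_def)
next
  case (Suc M)
  define g' where "g' x = min (g x) M" for x
  define B where "B = {x. g x = Suc M}"
  have g: "g x = g' x + (if x \<in> B then 1 else 0)" if "x \<in> X" for x
    using Suc.prems[OF that] by (auto simp: g'_def B_def)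
  have g'_le: "\<And>x. x \<in> X \<Longrightarrow> g' x \<le> M" by (simp add: g'_def)
  have "layer_sum (N + Suc M) (\<lambda>x. f x + g x) =
      layer_sum (Suc (N + M)) (\<lambda>x. (f x + g' x) + (if x \<in> B then 1 else 0))"
    unfolding add_Suc_right using g by (intro layer_sum_cong) (simp add: add.assoc)
  also have "\<dots> = layer_sum (N + M) (\<lambda>x. f x + g' x) + \<mu> (B \<inter> X)"
    by (rule layer_sum_add_indicator) (use assms(1) g'_le in force)
  also have "\<dots> = layer_sum N f + (layer_sum M g' + \<mu> (B \<inter> X))"
    using Suc.IH[OF g'_le] by simp
  also have "layer_sum M g' + \<mu> (B \<inter> X) = layer_sum (Suc M) g"
    using layer_sum_add_indicator[of g' M B, OF g'_le] g by (simp cong: layer_sum_cong)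
  finally show ?case .
qed

lemma layer_sum_constant_on:
  assumes "c \<le> N"
  shows "layer_sum N (\<lambda>x. if x \<in> F then c else 0) = real c * \<mu> (F \<inter> X)"
proof -
  have "layer_sum N (\<lambda>x. if x \<in> F then c else 0) = layer_sum c (\<lambda>x. if x \<in> F then c else 0)"
    by (rule layer_sum_level) (use assms in auto)
  also have "\<dots> = (\<Sum>k = 1..c. \<mu> (F \<inter> X))"
    unfolding layer_sum_def by (intro sum.cong refl arg_cong[where f = \<mu>]) auto
  finally show ?thesis by simp
qed

lemma layer_sum_invariant:
  assumes "mean_preserving \<sigma>"
  shows "layer_sum N (\<lambda>x. f (\<sigma> x)) = layer_sum N f"
  unfolding layer_sum_def
proof (intro sum.cong refl)
  fix k
  have "\<sigma> ` {x \<in> X. k \<le> f (\<sigma> x)} = {y \<in> X. k \<le> f y}"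
    using assms unfolding mean_preserving_def bij_betw_def by auto
  moreover have "{x \<in> X. k \<le> f (\<sigma> x)} \<subseteq> X" by blast
  ultimately show "\<mu> {x \<in> X. k \<le> f (\<sigma> x)} = \<mu> {x \<in> X. k \<le> f x}"
    using assms unfolding mean_preserving_def by metis
qed

end

lemma floor_ratio_tendsto:
  fixes c :: real assumes "0 \<le> c"
  shows "(\<lambda>m. real (nat \<lfloor>real m * c\<rfloor>) / real m) \<longlonglongrightarrow> c"
proof (rule tendsto_sandwich[where f = "\<lambda>m. c - 1 / real m" and h = "\<lambda>m. c"])
  show "\<forall>\<^sub>F m in sequentially. c - 1 / real m \<le> real (nat \<lfloor>real m * c\<rfloor>) / real m"
    using eventually_gt_at_top[of "0::nat"]
  proof eventually_elim
    case (elim m)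
    have "real m * c - 1 \<le> real (nat \<lfloor>real m * c\<rfloor>)"
      using assms by linarith
    moreover have "c - 1 / real m = (real m * c - 1) / real m" using elim by (simp add: field_simps)
    ultimately show ?case by (simp add: divide_right_mono)
  qed
  show "\<forall>\<^sub>F m in sequentially. real (nat \<lfloor>real m * c\<rfloor>) / real m \<le> c"
    using eventually_gt_at_top[of "0::nat"]
  proof eventually_elim
    case (elim m)
    have "real (nat \<lfloor>real m * c\<rfloor>) \<le> real m * c" using assms by simp
    then show ?case using elim by (simp add: field_simps)
  qed
  show "(\<lambda>m. c - 1 / real m) \<longlonglongrightarrow> c"
    using tendsto_diff[OF tendsto_const[of c] lim_1_over_n] by simp
qed simp

lemma nat_floor_add_carry:
  fixes a b :: real assumes "0 \<le> a" "0 \<le> b"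
  shows "nat \<lfloor>a + b\<rfloor> = nat \<lfloor>a\<rfloor> + nat \<lfloor>b\<rfloor> \<or> nat \<lfloor>a + b\<rfloor> = nat \<lfloor>a\<rfloor> + nat \<lfloor>b\<rfloor> + 1"
  using assms floor_add[of a b] by (auto split: if_splits simp: nat_add_distrib)

definition tuples :: "'a set \<Rightarrow> nat \<Rightarrow> 'a list set" where
  "tuples S n = {xs. set xs \<subseteq> S \<and> length xs = n}"

lemma tuples_0: "tuples S 0 = {[]}"
  by (auto simp: tuples_def)

lemma tuples_section: "x \<in> S \<Longrightarrow> {xs. x # xs \<in> tuples S (Suc n)} = tuples S n"
  by (auto simp: tuples_def)

lemma section_subset_tuples: "A \<subseteq> tuples S (Suc n) \<Longrightarrow> {xs. x # xs \<in> A} \<subseteq> tuples S n"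
  unfolding tuples_def by fastforce

locale mean_ultralimit = mean_space X \<mu> for X :: "'x set" and \<mu> +
  fixes U :: "nat filter"
  assumes ultra: "ultrafilter U" and free: "U \<le> sequentially"
begin

(* The integral of a [0,1]-valued function h: discretise h at mesh 1/m, take the layer sum
   and pass to the ultralimit in m. *)
definition grid :: "nat \<Rightarrow> ('x \<Rightarrow> real) \<Rightarrow> 'x \<Rightarrow> nat" where
  "grid m h x = nat \<lfloor>real m * h x\<rfloor>"

definition integral :: "('x \<Rightarrow> real) \<Rightarrow> real" where
  "integral h = ulim U (\<lambda>m. layer_sum m (grid m h) / real m)"

lemma grid_le:
  assumes "h x \<le> 1"
  shows "grid m h x \<le> m"
proof -
  have "real m * h x \<le> real m" using mult_left_le[OF assms, of "real m"] by simp
  then show ?thesis unfolding grid_def by linarith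
qed

lemma normalized_layer_sum_bounds: "layer_sum m f / real m \<in> {0..1}"
  using layer_sum_bounds[of m f] by (cases "m = 0") (auto simp: layer_sum_def field_simps)

lemma integral_tendsto: "((\<lambda>m. layer_sum m (grid m h) / real m) \<longlongrightarrow> integral h) U"
  unfolding integral_def by (rule ultrafilter_tendsto_ulim[OF ultra normalized_layer_sum_bounds])

lemma integral_bounds: "integral h \<in> {0..1}"
  unfolding integral_def by (rule ulim_bounds[OF ultra normalized_layer_sum_bounds])

lemma integral_cong: "(\<And>x. x \<in> X \<Longrightarrow> h x = h' x) \<Longrightarrow> integral h = integral h'"
  unfolding integral_def grid_def by (simp cong: layer_sum_cong)

(* Additivity: floor(m(h1+h2)) differs from floor(m h1)+floor(m h2) by a carry in {0,1},
   whose contribution to the normalised layer sum is at most 1/m. *)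
lemma integral_add:
  assumes h: "\<And>x. x \<in> X \<Longrightarrow> 0 \<le> h1 x \<and> 0 \<le> h2 x \<and> h1 x + h2 x \<le> 1"
  shows "integral (\<lambda>x. h1 x + h2 x) = integral h1 + integral h2"
proof -
  define S where "S h m = layer_sum m (grid m h) / real m" for h m
  define B where "B m = {x. grid m (\<lambda>x. h1 x + h2 x) x \<noteq> grid m h1 x + grid m h2 x}" for m
  have carry: "grid m (\<lambda>x. h1 x + h2 x) x = (grid m h1 x + grid m h2 x) + (if x \<in> B m then 1 else 0)"
    if "x \<in> X" for m x
    using nat_floor_add_carry[of "real m * h1 x" "real m * h2 x"] h[OF that]
    by (auto simp: B_def grid_def distrib_left)
  have bounded: "grid m h1 x \<le> m" "grid m h2 x \<le> m" "grid m (\<lambda>x. h1 x + h2 x) x \<le> m"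
    if "x \<in> X" for m x
    using h[OF that] by (auto intro!: grid_le)
  have decomposition: "S (\<lambda>x. h1 x + h2 x) m = S h1 m + S h2 m + \<mu> (B m \<inter> X) / real m" for m
  proof -
    have "layer_sum m (grid m (\<lambda>x. h1 x + h2 x)) = layer_sum (Suc (m + m)) (grid m (\<lambda>x. h1 x + h2 x))"
      by (rule layer_sum_level[symmetric]) (use bounded in auto)
    also have "\<dots> = layer_sum (Suc (m + m)) (\<lambda>x. (grid m h1 x + grid m h2 x) + (if x \<in> B m then 1 else 0))"
      by (rule layer_sum_cong) (rule carry)
    also have "\<dots> = layer_sum (m + m) (\<lambda>x. grid m h1 x + grid m h2 x) + \<mu> (B m \<inter> X)"
      by (rule layer_sum_add_indicator) (use bounded in \<open>auto intro: add_mono\<close>)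
    also have "\<dots> = layer_sum m (grid m h1) + layer_sum m (grid m h2) + \<mu> (B m \<inter> X)"
      using layer_sum_add[of "grid m h1" m "grid m h2" m] bounded by simp
    finally show ?thesis by (simp add: S_def add_divide_distrib)
  qed
  have carry_vanishes: "(\<lambda>m. \<mu> (B m \<inter> X) / real m) \<longlonglongrightarrow> 0"
  proof (rule tendsto_sandwich[where f = "\<lambda>_. 0" and h = "\<lambda>m. 1 / real m"])
    have "0 \<le> \<mu> (B m \<inter> X) \<and> \<mu> (B m \<inter> X) \<le> 1" for m by (rule measure_bounds) auto
    then show "\<forall>\<^sub>F m in sequentially. 0 \<le> \<mu> (B m \<inter> X) / real m"
      and "\<forall>\<^sub>F m in sequentially. \<mu> (B m \<inter> X) / real m \<le> 1 / real m"
      by (auto intro!: always_eventually divide_right_mono)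
  qed (simp_all add: lim_1_over_n)
  have "((\<lambda>m. S (\<lambda>x. h1 x + h2 x) m) \<longlongrightarrow> integral h1 + integral h2 + 0) U"
    unfolding decomposition unfolding S_def
    by (intro tendsto_add integral_tendsto tendsto_mono[OF free carry_vanishes])
  then show ?thesis
    unfolding integral_def S_def[symmetric] by (simp add: ulim_unique[OF ultra])
qed

lemma integral_constant_on:
  assumes "0 \<le> c" "c \<le> 1"
  shows "integral (\<lambda>x. if x \<in> F then c else 0) = c * \<mu> (F \<inter> X)"
proof -
  have "grid m (\<lambda>x. if x \<in> F then c else 0) = (\<lambda>x. if x \<in> F then nat \<lfloor>real m * c\<rfloor> else 0)" for m
    by (auto simp: grid_def)
  moreover have "nat \<lfloor>real m * c\<rfloor> \<le> m" for m
    using grid_le[of "\<lambda>_. c"] assms unfolding grid_def by blast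
  ultimately have "integral (\<lambda>x. if x \<in> F then c else 0) =
      ulim U (\<lambda>m. real (nat \<lfloor>real m * c\<rfloor>) / real m * \<mu> (F \<inter> X))"
    unfolding integral_def by (simp add: layer_sum_constant_on)
  also have "\<dots> = c * \<mu> (F \<inter> X)"
    by (rule ulim_sequentially[OF ultra free tendsto_mult[OF floor_ratio_tendsto[OF assms(1)] tendsto_const]])
  finally show ?thesis .
qed

lemma integral_invariant:
  assumes "mean_preserving \<sigma>"
  shows "integral (\<lambda>x. h (\<sigma> x)) = integral h"
  using layer_sum_invariant[OF assms, of _ "grid _ h"] unfolding integral_def grid_def by simp

(* The product mean mu^n on tuples of length n: integrate the measure of the sections
   over the first entry. *)
primrec power_mean :: "nat \<Rightarrow> 'x list set \<Rightarrow> real" where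
  "power_mean 0 A = (if [] \<in> A then 1 else 0)"
| "power_mean (Suc n) A = integral (\<lambda>x. power_mean n {xs. x # xs \<in> A})"

lemma power_mean_is_mean: "is_mean (tuples X n) (power_mean n)"
proof (induction n)
  case 0
  show ?case unfolding is_mean_def tuples_0 by (auto simp: subset_singleton_iff)
next
  case (Suc n)
  interpret factor: mean_space "tuples X n" "power_mean n" by unfold_locales (rule Suc)
  show ?case unfolding is_mean_def
  proof (intro conjI allI impI)
    fix A
    show "0 \<le> power_mean (Suc n) A" "power_mean (Suc n) A \<le> 1" using integral_bounds by auto
  next
    have "power_mean (Suc n) (tuples X (Suc n)) = integral (\<lambda>x. if x \<in> X then 1 else 0)"
      using Suc by (auto simp: tuples_section is_mean_def intro: integral_cong)
    also have "\<dots> = 1" using integral_constant_on[of 1 X] mean by (simp add: is_mean_def)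
    finally show "power_mean (Suc n) (tuples X (Suc n)) = 1" .
  next
    fix A B assume AB: "A \<subseteq> tuples X (Suc n)" "B \<subseteq> tuples X (Suc n)" "A \<inter> B = {}"
    let ?h = "\<lambda>A x. power_mean n {xs. x # xs \<in> A}"
    have sections: "{xs. x # xs \<in> A} \<subseteq> tuples X n" "{xs. x # xs \<in> B} \<subseteq> tuples X n" for x
      using AB by (auto dest: section_subset_tuples)
    have additive: "?h (A \<union> B) x = ?h A x + ?h B x" for x
    proof -
      have "{xs. x # xs \<in> A \<union> B} = {xs. x # xs \<in> A} \<union> {xs. x # xs \<in> B}" by auto
      then show ?thesis using AB(3) by (simp add: factor.measure_Un[OF sections] disjoint_iff)
    qed
    have "0 \<le> ?h A x \<and> 0 \<le> ?h B x \<and> ?h A x + ?h B x \<le> 1" for x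
      using factor.measure_bounds[of "{xs. x # xs \<in> A \<union> B}"] sections[of x]
        factor.measure_bounds[OF sections(1)] factor.measure_bounds[OF sections(2)]
      by (auto simp: additive[symmetric])
    then show "power_mean (Suc n) (A \<union> B) = power_mean (Suc n) A + power_mean (Suc n) B"
      unfolding power_mean.simps additive by (intro integral_add)
  qed
qed

(* The product mean is invariant under the diagonal action of a mean-preserving bijection;
   the first entry is handled by invariance of the integral, the rest by induction. *)
lemma power_mean_invariant:
  assumes \<sigma>: "mean_preserving \<sigma>"
  shows "A \<subseteq> tuples X n \<Longrightarrow> power_mean n (map \<sigma> ` A) = power_mean n A"
proof (induction n arbitrary: A)
  case 0
  then have "A = {} \<or> A = {[]}" by (auto simp: tuples_0)
  then show ?case by auto
next
  case (Suc n)
  have inj: "inj_on \<sigma> X" using \<sigma> by (simp add: mean_preserving_def bij_betw_def)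
  have image_section: "{xs. \<sigma> y # xs \<in> map \<sigma> ` A} = map \<sigma> ` {ys. y # ys \<in> A}" if "y \<in> X" for y
  proof (intro equalityI subsetI)
    fix xs assume "xs \<in> {xs. \<sigma> y # xs \<in> map \<sigma> ` A}"
    then obtain z zs where "z # zs \<in> A" "\<sigma> z = \<sigma> y" "xs = map \<sigma> zs"
      by (auto simp: Cons_eq_map_conv)
    moreover have "z \<in> X" using Suc.prems \<open>z # zs \<in> A\<close> by (auto simp: tuples_def)
    ultimately show "xs \<in> map \<sigma> ` {ys. y # ys \<in> A}" using inj_onD[OF inj _ _ that] by auto
  qed force
  have "power_mean (Suc n) (map \<sigma> ` A) = integral (\<lambda>y. power_mean n {xs. \<sigma> y # xs \<in> map \<sigma> ` A})"
    unfolding power_mean.simps by (rule integral_invariant[OF \<sigma>, symmetric])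
  also have "\<dots> = power_mean (Suc n) A"
    unfolding power_mean.simps
    using Suc.IH[OF section_subset_tuples[OF Suc.prems]] by (intro integral_cong) (simp add: image_section)
  finally show ?case .
qed

lemma power_mean_tuples:
  assumes F: "F \<subseteq> X"
  shows "power_mean n (tuples F n) = \<mu> F ^ n"
proof (induction n)
  case (Suc n)
  have "power_mean (Suc n) (tuples F (Suc n)) = integral (\<lambda>x. if x \<in> F then \<mu> F ^ n else 0)"
    unfolding power_mean.simps
  proof (rule integral_cong)
    fix x
    show "power_mean n {xs. x # xs \<in> tuples F (Suc n)} = (if x \<in> F then \<mu> F ^ n else 0)"
      using Suc power_mean_is_mean[of n]
      by (auto simp: tuples_section tuples_def mean_space.measure_empty[OF mean_space.intro])
  qed
  also have "\<dots> = \<mu> F ^ n * \<mu> (F \<inter> X)"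
    using measure_bounds[OF F] by (intro integral_constant_on) (auto intro: power_le_one)
  also have "F \<inter> X = F" using F by blast
  finally show ?case by simp
qed (simp add: tuples_0)

definition list_mean :: "'x list set \<Rightarrow> real" where
  "list_mean A = ulim U (\<lambda>n. power_mean n (A \<inter> tuples X n))"

lemma power_mean_bounds: "power_mean n (A \<inter> tuples X n) \<in> {0..1}"
  using power_mean_is_mean[of n] unfolding is_mean_def by auto

lemma list_mean_is_mean: "is_mean (lists X) list_mean"
  unfolding is_mean_def
proof (intro conjI allI impI)
  fix A :: "'x list set"
  show "0 \<le> list_mean A" "list_mean A \<le> 1"
    using ulim_bounds[OF ultra power_mean_bounds] unfolding list_mean_def by auto
next
  have "lists X \<inter> tuples X n = tuples X n" for n by (auto simp: tuples_def)
  then have "list_mean (lists X) = ulim U (\<lambda>n. 1)"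
    using power_mean_is_mean unfolding list_mean_def is_mean_def by simp
  also have "\<dots> = 1" by (rule ulim_unique[OF ultra tendsto_const])
  finally show "list_mean (lists X) = 1" .
next
  fix A B :: "'x list set" assume "A \<inter> B = {}"
  then have "power_mean n ((A \<union> B) \<inter> tuples X n) =
      power_mean n (A \<inter> tuples X n) + power_mean n (B \<inter> tuples X n)" for n
    using mean_space.measure_Un[OF mean_space.intro[OF power_mean_is_mean[of n]],
        of "A \<inter> tuples X n" "B \<inter> tuples X n"]
    by (auto simp: Int_Un_distrib2)
  then show "list_mean (A \<union> B) = list_mean A + list_mean B"
    unfolding list_mean_def by (simp add: ulim_add[OF ultra power_mean_bounds power_mean_bounds])
qed

lemma list_mean_invariant:
  assumes \<sigma>: "mean_preserving \<sigma>" and A: "A \<subseteq> lists X"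
  shows "list_mean (map \<sigma> ` A) = list_mean A"
proof -
  have into: "\<sigma> ` X \<subseteq> X" using \<sigma> by (simp add: mean_preserving_def bij_betw_def)
  have "map \<sigma> ` A \<inter> tuples X n = map \<sigma> ` (A \<inter> tuples X n)" for n
  proof (intro equalityI subsetI)
    fix ys assume "ys \<in> map \<sigma> ` A \<inter> tuples X n"
    then obtain xs where "xs \<in> A" "ys = map \<sigma> xs" "length xs = n" by (auto simp: tuples_def)
    then show "ys \<in> map \<sigma> ` (A \<inter> tuples X n)" using A by (auto simp: tuples_def)
  next
    fix ys assume "ys \<in> map \<sigma> ` (A \<inter> tuples X n)"
    then show "ys \<in> map \<sigma> ` A \<inter> tuples X n" using into by (auto simp: tuples_def) (meson image_subset_iff subsetD)
  qed
  then show ?thesis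
    unfolding list_mean_def by (simp add: power_mean_invariant[OF \<sigma>])
qed

(* The key estimate: the lists fixed by sigma are the tuples of sigma-fixed points, which have
   measure mu(Fix sigma)^n -> 0 when mu(Fix sigma) < 1. *)
lemma list_mean_fixed_lists:
  assumes "\<mu> {x \<in> X. \<sigma> x = x} < 1"
  shows "list_mean {xs \<in> lists X. map \<sigma> xs = xs} = 0"
proof -
  let ?F = "{x \<in> X. \<sigma> x = x}"
  have "{xs \<in> lists X. map \<sigma> xs = xs} \<inter> tuples X n = tuples ?F n" for n
    using map_eq_conv[of \<sigma> _ "\<lambda>x. x"] by (auto simp: tuples_def)
  then have "list_mean {xs \<in> lists X. map \<sigma> xs = xs} = ulim U (\<lambda>n. \<mu> ?F ^ n)"
    unfolding list_mean_def by (simp add: power_mean_tuples)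
  also have "\<dots> = 0"
    using measure_bounds[of ?F] assms
    by (intro ulim_sequentially[OF ultra free] LIMSEQ_power_zero) auto
  finally show ?thesis .
qed

end

lemma group_actionI:
  assumes "group G"
    and bij: "\<And>g. g \<in> carrier G \<Longrightarrow> \<psi> g \<in> Bij E"
    and composition: "\<And>g h x. g \<in> carrier G \<Longrightarrow> h \<in> carrier G \<Longrightarrow> x \<in> E \<Longrightarrow>
      \<psi> (g \<otimes>\<^bsub>G\<^esub> h) x = \<psi> g (\<psi> h x)"
  shows "group_action G E \<psi>"
  unfolding group_action_def group_hom_def group_hom_axioms_def
proof (intro conjI assms group_BijGroup homI)
  fix g assume "g \<in> carrier G"
  then show "\<psi> g \<in> carrier (BijGroup E)" using bij by (simp add: BijGroup_def)
next
  fix g h assume g: "g \<in> carrier G" and h: "h \<in> carrier G"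
  have "\<psi> (g \<otimes>\<^bsub>G\<^esub> h) = compose E (\<psi> g) (\<psi> h)"
  proof (rule extensionalityI[of _ E])
    show "\<psi> (g \<otimes>\<^bsub>G\<^esub> h) \<in> extensional E"
      using bij[OF group.subgroup_self[OF \<open>group G\<close>, THEN subgroup.m_closed, OF g h]]
      by (simp add: Bij_def)
  qed (auto simp: compose_def composition[OF g h])
  then show "\<psi> (g \<otimes>\<^bsub>G\<^esub> h) = \<psi> g \<otimes>\<^bsub>BijGroup E\<^esub> \<psi> h"
    using bij[OF g] bij[OF h] by (simp add: BijGroup_def)
qed

lemma (in group_action) lists_action:
  "group_action G (lists E) (\<lambda>g. restrict (map (\<phi> g)) (lists E))"
proof (rule group_actionI)
  show "group G" using group_hom by (simp add: group_hom_def)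
next
  fix g assume "g \<in> carrier G"
  then have "bij_betw (map (\<phi> g)) (lists E) (lists E)"
    using bij_prop0 by (intro bij_lists) (simp add: Bij_def)
  then show "restrict (map (\<phi> g)) (lists E) \<in> Bij (lists E)"
    by (simp add: Bij_def bij_betw_restrict_eq)
next
  fix g h xs assume g: "g \<in> carrier G" and h: "h \<in> carrier G" and xs: "xs \<in> lists E"
  have "map (\<phi> h) xs \<in> lists E" using xs element_image[OF h _ refl] by auto
  then show "restrict (map (\<phi> (g \<otimes> h))) (lists E) xs =
      restrict (map (\<phi> g)) (lists E) (restrict (map (\<phi> h)) (lists E) xs)"
    using xs composition_rule[OF _ g h] by auto
qed

lemma (in group_action) mean_preserving_action:
  assumes "is_mean E \<mu>" "preserves_mean G E \<phi> \<mu>" "g \<in> carrier G"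
  shows "mean_space.mean_preserving E \<mu> (\<phi> g)"
  using assms bij_prop0[OF assms(3)]
  by (simp add: mean_space.mean_preserving_def[OF mean_space.intro] preserves_mean_def Bij_def)

locale enumerated_action = group_action G L \<psi>
  for G :: "('g, 'c) monoid_scheme" (structure) and L :: "'a set" and \<psi> :: "'g \<Rightarrow> 'a \<Rightarrow> 'a" +
  fixes d :: "nat \<Rightarrow> 'a"
  assumes enumeration: "bij_betw d UNIV L"
begin

definition pullback_action :: "'g \<Rightarrow> nat \<Rightarrow> nat" where
  "pullback_action g n = inv_into UNIV d (\<psi> g (d n))"

definition pullback_mean :: "('a set \<Rightarrow> real) \<Rightarrow> nat set \<Rightarrow> real" where
  "pullback_mean \<nu> A = \<nu> (d ` A)"

lemma enumeration_in: "d n \<in> L"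
  using enumeration by (auto simp: bij_betw_def)

lemma enumeration_inj: "inj d"
  using enumeration by (simp add: bij_betw_def)

lemma enumeration_pullback: "g \<in> carrier G \<Longrightarrow> d (pullback_action g n) = \<psi> g (d n)"
  unfolding pullback_action_def
  using bij_betw_inv_into_right[OF enumeration element_image[OF _ enumeration_in refl]] by simp

lemma pullback_group_action: "group_action G UNIV pullback_action"
proof (rule group_actionI)
  show "group G" using group_hom by (simp add: group_hom_def)
next
  fix g assume "g \<in> carrier G"
  then have "bij_betw (\<psi> g) L L" using bij_prop0 by (simp add: Bij_def)
  then have "bij_betw (inv_into UNIV d \<circ> \<psi> g \<circ> d) UNIV UNIV"
    using enumeration bij_betw_inv_into[OF enumeration] by (blast intro: bij_betw_trans)
  then show "pullback_action g \<in> Bij UNIV"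
    by (simp add: Bij_def pullback_action_def[abs_def] comp_def)
next
  fix g h n assume "g \<in> carrier G" "h \<in> carrier G"
  then show "pullback_action (g \<otimes> h) n = pullback_action g (pullback_action h n)"
    using composition_rule[OF enumeration_in] enumeration_pullback
    by (simp add: pullback_action_def)
qed

lemma pullback_is_mean: "is_mean L \<nu> \<Longrightarrow> is_mean UNIV (pullback_mean \<nu>)"
  using enumeration_in enumeration enumeration_inj
  unfolding is_mean_def pullback_mean_def bij_betw_def
  by (auto simp: image_Un image_Int[symmetric] image_subset_iff)

lemma pullback_preserves_mean:
  assumes "preserves_mean G L \<psi> \<nu>"
  shows "preserves_mean G UNIV pullback_action (pullback_mean \<nu>)"
  unfolding preserves_mean_def
proof (intro ballI allI impI)
  fix g A assume g: "g \<in> carrier G"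
  have "d ` pullback_action g ` A = \<psi> g ` d ` A" by (simp add: image_image enumeration_pullback[OF g])
  moreover have "d ` A \<subseteq> L" using enumeration_in by auto
  ultimately show "pullback_mean \<nu> (pullback_action g ` A) = pullback_mean \<nu> A"
    using assms g by (simp add: preserves_mean_def pullback_mean_def)
qed

lemma pullback_fixset:
  assumes g: "g \<in> carrier G"
  shows "pullback_mean \<nu> (fixset UNIV pullback_action g) = \<nu> (fixset L \<psi> g)"
proof -
  have "pullback_action g n = n \<longleftrightarrow> \<psi> g (d n) = d n" for n
    by (metis enumeration_pullback[OF g] enumeration_inj inj_eq)
  then have "d ` fixset UNIV pullback_action g = d ` {n. \<psi> g (d n) = d n}" by (simp add: fixset_def)
  also have "\<dots> = fixset L \<psi> g"
    using enumeration by (auto simp: fixset_def bij_betw_def)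
  finally show ?thesis by (simp add: pullback_mean_def)
qed

end

lemma transport_action_to_nat:
  fixes L :: "'a set" and \<psi> :: "'g \<Rightarrow> 'a \<Rightarrow> 'a" and \<nu> :: "'a set \<Rightarrow> real"
  assumes "countable L" "infinite L"
    and "group_action G L \<psi>" "is_mean L \<nu>" "preserves_mean G L \<psi> \<nu>"
  shows "\<exists>(\<psi>' :: 'g \<Rightarrow> nat \<Rightarrow> nat) (\<nu>' :: nat set \<Rightarrow> real).
    group_action G UNIV \<psi>' \<and> is_mean UNIV \<nu>' \<and> preserves_mean G UNIV \<psi>' \<nu>' \<and>
    (\<forall>g \<in> carrier G. \<nu>' (fixset UNIV \<psi>' g) = \<nu> (fixset L \<psi> g))"
proof -
  interpret enumerated_action G L \<psi> "from_nat_into L"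
    using assms(1-3) by (intro enumerated_action.intro enumerated_action_axioms.intro bij_betw_from_nat_into)
  show ?thesis
    using pullback_group_action pullback_is_mean pullback_preserves_mean pullback_fixset assms(4,5)
    by blast
qed

theorem lemma5p2:
  fixes G :: "('g, 'b) monoid_scheme" and X :: "'x set" and \<phi> :: "'g \<Rightarrow> 'x \<Rightarrow> 'x"
    and \<mu> :: "'x set \<Rightarrow> real"
  assumes "countable (carrier G)"
    and "countable X" and "infinite X"
    and "group_action G X \<phi>"
    and "is_mean X \<mu>"
    and "preserves_mean G X \<phi> \<mu>"
    and "\<And>g. g \<in> carrier G \<Longrightarrow> g \<noteq> \<one>\<^bsub>G\<^esub> \<Longrightarrow> \<mu> (fixset X \<phi> g) < 1"
  shows "\<exists>(K :: nat set) (\<psi> :: 'g \<Rightarrow> nat \<Rightarrow> nat) (\<nu> :: nat set \<Rightarrow> real).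
           countable K \<and> infinite K \<and>
           group_action G K \<psi> \<and> is_mean K \<nu> \<and> preserves_mean G K \<psi> \<nu> \<and>
           (\<forall>g \<in> carrier G. g \<noteq> \<one>\<^bsub>G\<^esub> \<longrightarrow> \<nu> (fixset K \<psi> g) = 0)"
proof -
  obtain U :: "nat filter" where "ultrafilter U" "U \<le> sequentially"
    using free_ultrafilter_exists by blast
  then interpret mean_ultralimit X \<mu> U using assms(5) by unfold_locales
  interpret group_action G X \<phi> by (rule assms(4))
  define \<psi> where "\<psi> g = restrict (map (\<phi> g)) (lists X)" for g
  have countable: "countable (lists X)" using assms(2) by simp
  have infinite: "infinite (lists X)"
  proof (rule infinite_super)
    show "(\<lambda>x. [x]) ` X \<subseteq> lists X" by auto
    show "infinite ((\<lambda>x. [x]) ` X)" using assms(3) finite_imageD[of "\<lambda>x. [x]" X] by (auto simp: inj_on_def)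
  qed
  have action: "group_action G (lists X) \<psi>" unfolding \<psi>_def by (rule lists_action)
  have preserves: "preserves_mean G (lists X) \<psi> list_mean"
    unfolding preserves_mean_def
  proof (intro ballI allI impI)
    fix g A assume g: "g \<in> carrier G" and A: "A \<subseteq> lists X"
    then have "\<psi> g ` A = map (\<phi> g) ` A" unfolding \<psi>_def by (auto intro: image_cong)
    then show "list_mean (\<psi> g ` A) = list_mean A"
      using list_mean_invariant[OF mean_preserving_action[OF assms(5,6) g] A] by simp
  qed
  have fixed_null: "list_mean (fixset (lists X) \<psi> g) = 0" if "g \<in> carrier G" "g \<noteq> \<one>\<^bsub>G\<^esub>" for g
    using list_mean_fixed_lists[of "\<phi> g"] assms(7)[OF that]
    by (simp add: fixset_def \<psi>_def cong: conj_cong)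
  obtain \<psi>' :: "'g \<Rightarrow> nat \<Rightarrow> nat" and \<nu>' where
    "group_action G UNIV \<psi>'" "is_mean UNIV \<nu>'" "preserves_mean G UNIV \<psi>' \<nu>'"
    "\<forall>g \<in> carrier G. \<nu>' (fixset UNIV \<psi>' g) = list_mean (fixset (lists X) \<psi> g)"
    using transport_action_to_nat[OF countable infinite action list_mean_is_mean preserves] by blast
  then show ?thesis using fixed_null by (intro exI[of _ UNIV] exI[of _ \<psi>'] exI[of _ \<nu>']) auto
qed

end
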